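(* Let $\mathbf L\in\mathbb R_+^{n\times k}$. Then $\mathrm{CCdim}(\mathbf L)\le\operatorname{affdim}(\mathbf L)$.
   Context: Notation: $[m]=\{1,\dots,m\}$; $\Delta_n=\{\mathbf p\in\mathbb R_+^n:\sum_i p_i=1\}$. A loss matrix $\mathbf L\in\mathbb R_+^{n\times k}$ has columns $\boldsymbol\ell_t$, $t\in[k]$. Standing assumption: for each $t\in[k]$ there is $\mathbf p\in\Delta_n$ with $\operatorname{argmin}_{t'}\mathbf p^\top\boldsymbol\ell_{t'}=\{t\}$. $\operatorname{affdim}(\mathbf L)$ is the dimension of the affine hull of $\{\boldsymbol\ell_1,\dots,\boldsymbol\ell_k\}$ (i.e. of the linear subspace parallel to it). A surrogate loss $\boldsymbol\psi:\mathcal C\to\mathbb R_+^n$ ($\mathcal C\subseteq\mathbb R^d$ convex) is $\mathbf L$-calibrated if there is $\mathrm{pred}:\mathcal C\to[k]$ such that for all $\mathbf p\in\Delta_n$: $\inf_{\mathbf u\in\mathcal C:\mathrm{pred}(\mathbf u)\notin\operatorname{argmin}_t\mathbf p^\top\boldsymbol\ell_t}\mathbf p^\top\boldsymbol\psi(\mathbf u)>\inf_{\mathbf u\in\mathcal C}\mathbf p^\top\boldsymbol\psi(\mathbf u)$. $\mathrm{CCdim}(\mathbf L)$ is the smallest $d\in\mathbb Z_+$ for which there exist a convex set $\mathcal C\subseteq\mathbb R^d$ and a convex (componentwise convex) $\mathbf L$-calibrated surrogate $\boldsymbol\psi:\mathcal C\to\mathbb R_+^n$ ($\infty$ if none exists).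 *)

theory Defs
  imports "HOL-Analysis.Analysis" "HOL-Library.Extended_Nat" "HOL-Library.Extended_Real"
begin

text \<open>A loss matrix L in R_+^{n x k} is represented by its columns:
  L t :: real^'n for t in {1..k}. Outcomes are indexed by the finite type 'n (n = CARD('n)).\<close>

definition prob_simplex :: "(real^'n) set" where
  "prob_simplex = {p. (\<forall>i. 0 \<le> p $ i) \<and> (\<Sum>i\<in>UNIV. p $ i) = 1}"

definition argmin_loss :: "(nat \<Rightarrow> real^'n) \<Rightarrow> nat \<Rightarrow> real^'n \<Rightarrow> nat set" where
  "argmin_loss L k p = {t\<in>{1..k}. \<forall>t'\<in>{1..k}. p \<bullet> L t \<le> p \<bullet> L t'}"

definition affdim :: "(nat \<Rightarrow> real^'n) \<Rightarrow> nat \<Rightarrow> int" where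
  "affdim L k = aff_dim (L ` {1..k})"

text \<open>R^d is represented as the functions nat => real vanishing outside {1..d}.\<close>
definition Rd :: "nat \<Rightarrow> (nat \<Rightarrow> real) set" where
  "Rd d = {u. \<forall>i. i \<notin> {1..d} \<longrightarrow> u i = 0}"

definition convex_fset :: "(nat \<Rightarrow> real) set \<Rightarrow> bool" where
  "convex_fset C \<longleftrightarrow> (\<forall>u\<in>C. \<forall>v\<in>C. \<forall>\<theta>::real. 0 \<le> \<theta> \<and> \<theta> \<le> 1 \<longrightarrow>
      (\<lambda>i. \<theta> * u i + (1 - \<theta>) * v i) \<in> C)"

definition componentwise_convex_on :: "(nat \<Rightarrow> real) set \<Rightarrow> ((nat \<Rightarrow> real) \<Rightarrow> real^'n) \<Rightarrow> bool" where
  "componentwise_convex_on C psi \<longleftrightarrow> (\<forall>j. \<forall>u\<in>C. \<forall>v\<in>C. \<forall>\<theta>::real. 0 \<le> \<theta> \<and> \<theta> \<le> 1 \<longrightarrow>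
      psi (\<lambda>i. \<theta> * u i + (1 - \<theta>) * v i) $ j \<le> \<theta> * psi u $ j + (1 - \<theta>) * psi v $ j)"

definition calibrated :: "(nat \<Rightarrow> real^'n) \<Rightarrow> nat \<Rightarrow> (nat \<Rightarrow> real) set \<Rightarrow> ((nat \<Rightarrow> real) \<Rightarrow> real^'n) \<Rightarrow> bool" where
  "calibrated L k C psi \<longleftrightarrow> (\<exists>pred :: (nat \<Rightarrow> real) \<Rightarrow> nat. (\<forall>u\<in>C. pred u \<in> {1..k}) \<and>
     (\<forall>p\<in>prob_simplex.
        (INF u\<in>{u\<in>C. pred u \<notin> argmin_loss L k p}. ereal (p \<bullet> psi u))
          > (INF u\<in>C. ereal (p \<bullet> psi u))))"

definition CCdim :: "(nat \<Rightarrow> real^'n) \<Rightarrow> nat \<Rightarrow> enat" where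
  "CCdim L k = Inf {enat d | d. \<exists>(C :: (nat \<Rightarrow> real) set) (psi :: (nat \<Rightarrow> real) \<Rightarrow> real^'n).
      C \<subseteq> Rd d \<and> convex_fset C \<and> (\<forall>u\<in>C. \<forall>j. 0 \<le> psi u $ j) \<and>
      componentwise_convex_on C psi \<and> calibrated L k C psi}"

end

theory Submission
  imports Defs
begin

(* Let S be the set of columns of L and d its affine dimension.  Parametrise the
   affine hull of S by d real coordinates through an affine map A, and take as
   surrogate domain the set C of coordinate vectors that A sends into the convex
   hull of S, with surrogate psi = A itself.  Being affine, psi is convex; its
   values are convex combinations of nonnegative columns, hence nonnegative.
   For calibration, let pred(u) be a column carrying weight >= 1/k in some
   convex representation of A u.  If pred(u) is not optimal for p, then the
   expected surrogate loss p . A u exceeds the optimal loss (attained at a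
   column) by at least 1/k times the smallest suboptimality gap of p.
   The file first proves this weighting argument for convex hulls of finite sets,
   then a gap criterion for calibration, then the affine coordinatisation, and
   finally assembles the witness for CCdim. *)

lemma heavy_weight:
  fixes w :: "'b \<Rightarrow> real"
  assumes "finite I" "I \<noteq> {}" "sum w I = 1"
  shows "\<exists>i\<in>I. 1 / real (card I) \<le> w i"
proof (rule ccontr)
  assume "\<not> ?thesis"
  then have "sum w I < sum (\<lambda>_. 1 / real (card I)) I"
    using assms by (intro sum_strict_mono) auto
  then show False using assms by simp
qed

lemma convex_hull_heavy_point:
  fixes S :: "'a::real_inner set"
  assumes "finite S" "z \<in> convex hull S"
  shows "\<exists>y\<in>S. \<forall>p m. (\<forall>s\<in>S. m \<le> p \<bullet> s) \<longrightarrow> (p \<bullet> y - m) / real (card S) \<le> p \<bullet> z - m"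
proof -
  obtain w where w_nonneg: "\<forall>s\<in>S. 0 \<le> w s" and w_sum: "sum w S = 1"
    and z_eq: "(\<Sum>s\<in>S. w s *\<^sub>R s) = z"
    using assms by (auto simp: convex_hull_finite)
  have "S \<noteq> {}" using assms(2) by auto
  then obtain y where y: "y \<in> S" "1 / real (card S) \<le> w y"
    using heavy_weight[OF assms(1) _ w_sum] by blast
  have "(p \<bullet> y - m) / real (card S) \<le> p \<bullet> z - m" if m: "\<forall>s\<in>S. m \<le> p \<bullet> s" for p m
  proof -
    have "p \<bullet> z - m = (\<Sum>s\<in>S. w s * (p \<bullet> s - m))"
      using w_sum by (simp add: z_eq[symmetric] inner_sum_right right_diff_distrib
          sum_subtractf sum_distrib_right[symmetric])
    also have "\<dots> \<ge> w y * (p \<bullet> y - m)"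
      using y(1) w_nonneg m assms(1)
      by (intro member_le_sum[where f = "\<lambda>s. w s * (p \<bullet> s - m)"]) auto
    finally show ?thesis
      using y m mult_right_mono[OF y(2), of "p \<bullet> y - m"] by simp
  qed
  then show ?thesis using y(1) by blast
qed

lemma uniform_positive_gap:
  fixes f :: "'b \<Rightarrow> real"
  assumes "finite T" "\<forall>t\<in>T. 0 < f t"
  shows "\<exists>g>0. \<forall>t\<in>T. g \<le> f t"
proof (cases "T = {}")
  case True
  then show ?thesis by (intro exI[of _ 1]) auto
next
  case False
  then show ?thesis
    using assms by (intro exI[of _ "Min (f ` T)"]) auto
qed

lemma calibrated_by_margin:
  fixes L :: "nat \<Rightarrow> real^'n" and psi :: "(nat \<Rightarrow> real) \<Rightarrow> real^'n"
  assumes pred_range: "\<forall>u\<in>C. pred u \<in> {1..k}"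
    and margin: "\<And>p. p \<in> prob_simplex \<Longrightarrow> \<exists>m \<epsilon>. 0 < \<epsilon> \<and> (\<exists>u\<in>C. p \<bullet> psi u \<le> m)
                  \<and> (\<forall>u\<in>C. pred u \<notin> argmin_loss L k p \<longrightarrow> m + \<epsilon> \<le> p \<bullet> psi u)"
  shows "calibrated L k C psi"
  unfolding calibrated_def
proof (intro exI[of _ pred] conjI ballI)
  show "pred u \<in> {1..k}" if "u \<in> C" for u using pred_range that by blast
next
  fix p :: "real^'n" assume "p \<in> prob_simplex"
  then obtain m \<epsilon> u0 where pos: "0 < \<epsilon>" and u0: "u0 \<in> C" "p \<bullet> psi u0 \<le> m"
    and bad: "\<forall>u\<in>C. pred u \<notin> argmin_loss L k p \<longrightarrow> m + \<epsilon> \<le> p \<bullet> psi u"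
    using margin by blast
  have "(INF u\<in>C. ereal (p \<bullet> psi u)) \<le> ereal m"
    by (rule order_trans[OF INF_lower[OF u0(1)]]) (simp add: u0(2))
  also have "\<dots> < ereal (m + \<epsilon>)" using pos by simp
  also have "\<dots> \<le> (INF u\<in>{u\<in>C. pred u \<notin> argmin_loss L k p}. ereal (p \<bullet> psi u))"
    using bad by (intro INF_greatest) auto
  finally show "(INF u\<in>C. ereal (p \<bullet> psi u))
      < (INF u\<in>{u\<in>C. pred u \<notin> argmin_loss L k p}. ereal (p \<bullet> psi u))" .
qed

lemma heavy_column_predictor:
  fixes L :: "nat \<Rightarrow> real^'n" and psi :: "(nat \<Rightarrow> real) \<Rightarrow> real^'n"
  assumes hull_valued: "\<forall>u\<in>C. psi u \<in> convex hull (L ` {1..k})"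
  shows "\<exists>pred. \<forall>u\<in>C. pred u \<in> {1..k} \<and> (\<forall>p m. (\<forall>s\<in>{1..k}. m \<le> p \<bullet> L s)
           \<longrightarrow> (p \<bullet> L (pred u) - m) / real k \<le> p \<bullet> psi u - m)"
proof (rule bchoice, rule ballI)
  fix u assume u: "u \<in> C"
  obtain y where y: "y \<in> L ` {1..k}" and y_bound: "\<forall>p m. (\<forall>s\<in>L ` {1..k}. m \<le> p \<bullet> s)
      \<longrightarrow> (p \<bullet> y - m) / real (card (L ` {1..k})) \<le> p \<bullet> psi u - m"
    using convex_hull_heavy_point[OF _ hull_valued[rule_format, OF u]] by blast
  obtain t where t: "t \<in> {1..k}" "y = L t" using y by blast
  have card_pos: "0 < card (L ` {1..k})" using t by (auto simp: card_gt_0_iff)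
  have card_le: "card (L ` {1..k}) \<le> k" using card_image_le[of "{1..k}" L] by simp
  have "(p \<bullet> L t - m) / real k \<le> p \<bullet> psi u - m"
    if m: "\<forall>s\<in>{1..k}. m \<le> p \<bullet> L s" for p m
  proof -
    have "(p \<bullet> L t - m) / real k \<le> (p \<bullet> L t - m) / real (card (L ` {1..k}))"
      using m t card_pos card_le by (intro divide_left_mono) auto
    also have "\<dots> \<le> p \<bullet> psi u - m"
      using y_bound m unfolding t(2) by blast
    finally show ?thesis .
  qed
  then show "\<exists>t. t \<in> {1..k} \<and> (\<forall>p m. (\<forall>s\<in>{1..k}. m \<le> p \<bullet> L s)
      \<longrightarrow> (p \<bullet> L t - m) / real k \<le> p \<bullet> psi u - m)" using t(1) by blast
qed

text \<open>For a distribution p with optimal loss m, a wrong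
  prediction costs at least m + g/k, where g is the smallest suboptimality gap.\<close>

lemma calibrated_if_convex_hull_valued:
  fixes L :: "nat \<Rightarrow> real^'n" and psi :: "(nat \<Rightarrow> real) \<Rightarrow> real^'n"
  assumes "k \<ge> 1"
    and hull_valued: "\<forall>u\<in>C. psi u \<in> convex hull (L ` {1..k})"
    and reaches: "\<forall>t\<in>{1..k}. \<exists>u\<in>C. psi u = L t"
  shows "calibrated L k C psi"
proof -
  obtain pred where pred_range: "\<forall>u\<in>C. pred u \<in> {1..k}"
    and pred_bound: "\<And>u p m. u \<in> C \<Longrightarrow> \<forall>s\<in>{1..k}. m \<le> p \<bullet> L s
                       \<Longrightarrow> (p \<bullet> L (pred u) - m) / real k \<le> p \<bullet> psi u - m"
    using heavy_column_predictor[OF hull_valued] by blast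
  show ?thesis
  proof (rule calibrated_by_margin[OF pred_range])
    fix p :: "real^'n"
    define m where "m = Min ((\<lambda>s. p \<bullet> L s) ` {1..k})"
    have m_le: "\<forall>s\<in>{1..k}. m \<le> p \<bullet> L s" by (simp add: m_def)
    have "m \<in> (\<lambda>s. p \<bullet> L s) ` {1..k}"
      unfolding m_def using assms(1) by (intro Min_in) auto
    then obtain t0 where t0: "t0 \<in> {1..k}" "p \<bullet> L t0 = m" by auto
    obtain u0 where u0: "u0 \<in> C" "psi u0 = L t0" using reaches t0(1) by blast
    have suboptimal: "0 < p \<bullet> L t - m" if "t \<in> {t\<in>{1..k}. t \<notin> argmin_loss L k p}" for t
    proof -
      have "\<not> (\<forall>t'\<in>{1..k}. p \<bullet> L t \<le> p \<bullet> L t')"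
        using that by (simp add: argmin_loss_def)
      then obtain t' where t': "t' \<in> {1..k}" "p \<bullet> L t' < p \<bullet> L t"
        by (auto simp: not_le)
      have "m \<le> p \<bullet> L t'" using m_le t'(1) by blast
      then show ?thesis using t'(2) by linarith
    qed
    obtain g where g: "0 < g" "\<forall>t\<in>{t\<in>{1..k}. t \<notin> argmin_loss L k p}. g \<le> p \<bullet> L t - m"
      using uniform_positive_gap[of "{t\<in>{1..k}. t \<notin> argmin_loss L k p}" "\<lambda>t. p \<bullet> L t - m"]
        suboptimal by force
    have "m + g / real k \<le> p \<bullet> psi u" if "u \<in> C" "pred u \<notin> argmin_loss L k p" for u
    proof -
      have "g / real k \<le> (p \<bullet> L (pred u) - m) / real k"
        using g that pred_range assms(1) by (intro divide_right_mono) auto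
      also have "\<dots> \<le> p \<bullet> psi u - m" using pred_bound that(1) m_le .
      finally show ?thesis by simp
    qed
    moreover have "\<exists>u\<in>C. p \<bullet> psi u \<le> m" using u0 t0(2) by force
    moreover have "0 < g / real k" using g(1) assms(1) by simp
    ultimately show "\<exists>m \<epsilon>. 0 < \<epsilon> \<and> (\<exists>u\<in>C. p \<bullet> psi u \<le> m)
        \<and> (\<forall>u\<in>C. pred u \<notin> argmin_loss L k p \<longrightarrow> m + \<epsilon> \<le> p \<bullet> psi u)" by blast
  qed
qed

lemma convex_hull_nonneg:
  fixes S :: "(real^'n) set"
  assumes "\<forall>s\<in>S. \<forall>j. 0 \<le> s $ j" "z \<in> convex hull S"
  shows "0 \<le> z $ j"
proof -
  have "convex {x::real^'n. 0 \<le> x $ j}"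
    using convex_halfspace_ge[of 0 "axis j (1::real)"] by (simp add: inner_axis')
  then have "convex hull S \<subseteq> {x. 0 \<le> x $ j}"
    using assms(1) by (intro hull_minimal) auto
  then show ?thesis using assms(2) by blast
qed

definition coord_map :: "'a::real_vector \<Rightarrow> (nat \<Rightarrow> 'a) \<Rightarrow> nat \<Rightarrow> (nat \<Rightarrow> real) \<Rightarrow> 'a" where
  "coord_map a b d u = a + (\<Sum>i\<in>{1..d}. u i *\<^sub>R b i)"

lemma coord_map_convex_comb:
  "coord_map a b d (\<lambda>i. \<theta> * u i + (1 - \<theta>) * v i)
     = \<theta> *\<^sub>R coord_map a b d u + (1 - \<theta>) *\<^sub>R coord_map a b d v"
proof -
  have "(\<Sum>i\<in>{1..d}. (\<theta> * u i + (1 - \<theta>) * v i) *\<^sub>R b i)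
      = \<theta> *\<^sub>R (\<Sum>i\<in>{1..d}. u i *\<^sub>R b i) + (1 - \<theta>) *\<^sub>R (\<Sum>i\<in>{1..d}. v i *\<^sub>R b i)"
    by (simp add: scaleR_add_left sum.distrib scaleR_sum_right)
  moreover have "a = \<theta> *\<^sub>R a + (1 - \<theta>) *\<^sub>R a" by (simp add: scaleR_diff_left)
  ultimately show ?thesis unfolding coord_map_def by (simp add: scaleR_add_right)
qed

lemma Rd_convex_comb:
  "u \<in> Rd d \<Longrightarrow> v \<in> Rd d \<Longrightarrow> (\<lambda>i. \<theta> * u i + (1 - \<theta>) * v i) \<in> Rd d"
  by (simp add: Rd_def)

lemma affine_coordinates:
  fixes S :: "'a::euclidean_space set"
  assumes "a \<in> S"
  shows "\<exists>b. S \<subseteq> coord_map a b (nat (aff_dim S)) ` Rd (nat (aff_dim S))"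
proof -
  define V where "V = (+) (- a) ` S"
  define d where "d = nat (aff_dim S)"
  have d_dim: "d = dim V"
    unfolding d_def V_def using aff_dim_eq_dim[OF hull_inc[OF assms]] by simp
  obtain B where B: "independent B" "V \<subseteq> span B" "card B = d"
    unfolding d_dim by (rule basis_exists[of V])
  have finB: "finite B" using B(1) independent_bound by blast
  obtain b where b: "bij_betw b {1..d} B"
    using ex_bij_betw_nat_finite_1[OF finB] B(3) by auto
  have "s \<in> coord_map a b d ` Rd d" if s: "s \<in> S" for s
  proof -
    have "s - a \<in> span B" using s B(2) by (auto simp: V_def)
    then obtain c where c: "s - a = (\<Sum>x\<in>B. c x *\<^sub>R x)"
      using span_finite[OF finB] by auto
    define u where "u = (\<lambda>i. if i \<in> {1..d} then c (b i) else 0)"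
    have "(\<Sum>x\<in>B. c x *\<^sub>R x) = (\<Sum>i\<in>{1..d}. u i *\<^sub>R b i)"
      using sum.reindex_bij_betw[OF b, of "\<lambda>x. c x *\<^sub>R x"] by (simp add: u_def)
    then have "coord_map a b d u = s" using c by (simp add: coord_map_def algebra_simps)
    moreover have "u \<in> Rd d" by (simp add: Rd_def u_def)
    ultimately show ?thesis by blast
  qed
  then show ?thesis unfolding d_def by blast
qed

theorem mainTheorem8:
  fixes L :: "nat \<Rightarrow> real^'n" and k :: nat
  assumes "k \<ge> 1"
    and "\<forall>t\<in>{1..k}. \<forall>i. 0 \<le> L t $ i"
    and "\<forall>t\<in>{1..k}. \<exists>p\<in>prob_simplex. argmin_loss L k p = {t}"
  shows "CCdim L k \<le> enat (nat (affdim L k))"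
proof -
  define S where "S = L ` {1..k}"
  define d where "d = nat (affdim L k)"
  obtain b where coords: "S \<subseteq> coord_map (L 1) b d ` Rd d"
    using affine_coordinates[of "L 1" S] assms(1) by (auto simp: S_def d_def affdim_def)
  define A where "A = coord_map (L 1) b d"
  define C where "C = {u \<in> Rd d. A u \<in> convex hull S}"
  have "convex_fset C"
    unfolding convex_fset_def C_def A_def
    by (auto simp: Rd_convex_comb coord_map_convex_comb intro!: convexD[OF convex_convex_hull])
  moreover have "componentwise_convex_on C A"
    by (simp add: componentwise_convex_on_def A_def coord_map_convex_comb)
  moreover have "\<forall>u\<in>C. \<forall>j. 0 \<le> A u $ j"
    using convex_hull_nonneg[of S] assms(2) by (auto simp: C_def S_def)
  moreover have "calibrated L k C A"
    using coords hull_inc[of _ S]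
    by (intro calibrated_if_convex_hull_valued assms(1)) (force simp: C_def S_def A_def)+
  moreover have "C \<subseteq> Rd d" by (auto simp: C_def)
  ultimately have "CCdim L k \<le> enat d"
    unfolding CCdim_def by (intro Inf_lower) blast
  then show ?thesis by (simp add: d_def)
qed

end
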